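(* Let $G$ be a graph and $H$ a subgraph of $G$. If $G\in$ CBU then $H\in$ CBU. More precisely, if $K_{a,b}$ is a complete bipartite graph with $V(K_{a,b})\subseteq V(G)$, and $H$ is the graph on $V(G)$ with $E(H)=E(G)\setminus E(K_{a,b})$, then if $G$ belongs to $d$-CBU, $H$ belongs to $(d+1)$-CBU.
   Context: Let $e_1,\ldots,e_d$ be the standard basis of $\mathbb{R}^d$. For $d\ge 1$, a graph belongs to $d$-CBU if one can assign to each vertex an axis-parallel box (product of $d$ closed intervals of positive length) in $\mathbb{R}^d$ such that the boxes have pairwise disjoint interiors, two distinct vertices are adjacent iff their boxes intersect, and any two intersecting boxes intersect in a $(d-1)$-dimensional box orthogonal to $e_1$. CBU is the union of the classes $d$-CBU over all $d\ge1$. *)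

theory Defs
  imports Complex_Main
begin

text \<open>Points of R^d are represented as functions nat => real whose coordinates
  with index >= d vanish; coordinate 0 corresponds to e_1.\<close>

definition Rd :: "nat \<Rightarrow> (nat \<Rightarrow> real) set" where
  "Rd d = {x. \<forall>i\<ge>d. x i = 0}"

definition cbox_d :: "nat \<Rightarrow> (nat \<Rightarrow> real) \<Rightarrow> (nat \<Rightarrow> real) \<Rightarrow> (nat \<Rightarrow> real) set" where
  "cbox_d d lo hi = {x \<in> Rd d. \<forall>i<d. lo i \<le> x i \<and> x i \<le> hi i}"

definition obox_d :: "nat \<Rightarrow> (nat \<Rightarrow> real) \<Rightarrow> (nat \<Rightarrow> real) \<Rightarrow> (nat \<Rightarrow> real) set" where
  "obox_d d lo hi = {x \<in> Rd d. \<forall>i<d. lo i < x i \<and> x i < hi i}"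

definition perp_e1_box :: "nat \<Rightarrow> (nat \<Rightarrow> real) set \<Rightarrow> bool" where
  "perp_e1_box d S \<longleftrightarrow> (\<exists>c a b. (\<forall>i\<in>{1..<d}. a i < b i) \<and>
      S = {x \<in> Rd d. x 0 = c \<and> (\<forall>i\<in>{1..<d}. a i \<le> x i \<and> x i \<le> b i)})"

definition graph :: "'a set \<Rightarrow> 'a set set \<Rightarrow> bool" where
  "graph V E \<longleftrightarrow> finite V \<and> (\<forall>e\<in>E. \<exists>u v. u \<in> V \<and> v \<in> V \<and> u \<noteq> v \<and> e = {u, v})"

definition subgraph :: "'a set \<Rightarrow> 'a set set \<Rightarrow> 'a set \<Rightarrow> 'a set set \<Rightarrow> bool" where
  "subgraph VH EH VG EG \<longleftrightarrow> graph VH EH \<and> VH \<subseteq> VG \<and> EH \<subseteq> EG"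

definition dCBU :: "nat \<Rightarrow> 'a set \<Rightarrow> 'a set set \<Rightarrow> bool" where
  "dCBU d V E \<longleftrightarrow> d \<ge> 1 \<and> (\<exists>lo hi :: 'a \<Rightarrow> nat \<Rightarrow> real.
     (\<forall>v\<in>V. \<forall>i<d. lo v i < hi v i) \<and>
     (\<forall>u\<in>V. \<forall>v\<in>V. u \<noteq> v \<longrightarrow> obox_d d (lo u) (hi u) \<inter> obox_d d (lo v) (hi v) = {}) \<and>
     (\<forall>u\<in>V. \<forall>v\<in>V. u \<noteq> v \<longrightarrow>
        ({u, v} \<in> E \<longleftrightarrow> cbox_d d (lo u) (hi u) \<inter> cbox_d d (lo v) (hi v) \<noteq> {})) \<and>
     (\<forall>u\<in>V. \<forall>v\<in>V. u \<noteq> v \<longrightarrow> cbox_d d (lo u) (hi u) \<inter> cbox_d d (lo v) (hi v) \<noteq> {} \<longrightarrow>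
        perp_e1_box d (cbox_d d (lo u) (hi u) \<inter> cbox_d d (lo v) (hi v))))"

definition CBU :: "'a set \<Rightarrow> 'a set set \<Rightarrow> bool" where
  "CBU V E \<longleftrightarrow> (\<exists>d\<ge>1. dCBU d V E)"

definition complete_bipartite_edges :: "'a set \<Rightarrow> 'a set \<Rightarrow> 'a set set" where
  "complete_bipartite_edges A B = {{a, b} | a b. a \<in> A \<and> b \<in> B}"

end

(* Give every box an extra last coordinate, i.e. take its product with an interval: [0,1] for
   vertices of A, [2,3] for vertices of B and [0,3] for all others. Exactly the A-B pairs get
   disjoint intervals, so exactly the edges of the complete bipartite graph disappear; all other
   contacts survive as products of the old contact with an interval of positive length (no two of
   the intervals merely touch), hence remain (d-1)-dimensional boxes orthogonal to e_1.
   Deleting one edge {u,v} is the case A = {u}, B = {v}, so the edges of G missing from H can be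
   removed one at a time, and deleting vertices just forgets their boxes. *)

theory Submission
  imports Defs
begin

definition prism_d :: "nat \<Rightarrow> (nat \<Rightarrow> real) set \<Rightarrow> real set \<Rightarrow> (nat \<Rightarrow> real) set" where
  "prism_d d S I = {x. x(d := 0) \<in> S \<and> x d \<in> I}"

lemma Rd_Suc_iff: "x \<in> Rd (Suc d) \<longleftrightarrow> x(d := 0) \<in> Rd d"
  unfolding Rd_def by (auto simp: Suc_le_eq)

lemma cbox_d_Suc: "cbox_d (Suc d) lo hi = prism_d d (cbox_d d lo hi) {lo d..hi d}"
  unfolding prism_d_def cbox_d_def Rd_Suc_iff by (auto simp: less_Suc_eq)

lemma obox_d_Suc: "obox_d (Suc d) lo hi = prism_d d (obox_d d lo hi) {lo d<..<hi d}"
  unfolding prism_d_def obox_d_def Rd_Suc_iff by (auto simp: less_Suc_eq)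

lemma cbox_d_fun_upd [simp]: "cbox_d d (lo(d := a)) (hi(d := b)) = cbox_d d lo hi"
  unfolding cbox_d_def by auto

lemma obox_d_fun_upd [simp]: "obox_d d (lo(d := a)) (hi(d := b)) = obox_d d lo hi"
  unfolding obox_d_def by auto

lemma prism_d_Int: "prism_d d S I \<inter> prism_d d T J = prism_d d (S \<inter> T) (I \<inter> J)"
  unfolding prism_d_def by auto

lemma prism_d_eq_empty_iff:
  assumes "S \<subseteq> Rd d"
  shows "prism_d d S I = {} \<longleftrightarrow> S = {} \<or> I = {}"
proof
  assume empty: "prism_d d S I = {}"
  show "S = {} \<or> I = {}"
  proof (rule ccontr)
    assume "\<not> (S = {} \<or> I = {})"
    then obtain y t where "y \<in> S" "t \<in> I" by blast
    moreover have "y d = 0" using \<open>y \<in> S\<close> assms unfolding Rd_def by auto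
    ultimately have "y(d := t) \<in> prism_d d S I"
      unfolding prism_d_def by (simp add: fun_upd_idem)
    with empty show False by blast
  qed
qed (auto simp: prism_d_def)

lemma perp_e1_box_prism_d:
  assumes "1 \<le> d" "perp_e1_box d S" "a < b"
  shows "perp_e1_box (Suc d) (prism_d d S {a..b})"
proof -
  obtain c l h where lh: "\<forall>i\<in>{1..<d}. l i < h i"
    and S: "S = {x \<in> Rd d. x 0 = c \<and> (\<forall>i\<in>{1..<d}. l i \<le> x i \<and> x i \<le> h i)}"
    using assms(2) unfolding perp_e1_box_def by blast
  have "prism_d d S {a..b} = {x \<in> Rd (Suc d). x 0 = c \<and>
      (\<forall>i\<in>{1..<Suc d}. (l(d := a)) i \<le> x i \<and> x i \<le> (h(d := b)) i)}"
    unfolding S prism_d_def Rd_Suc_iff using assms(1) by (auto simp: less_Suc_eq)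
  moreover have "\<forall>i\<in>{1..<Suc d}. (l(d := a)) i < (h(d := b)) i"
    using lh assms(3) by (auto simp: less_Suc_eq)
  ultimately show ?thesis
    unfolding perp_e1_box_def by blast
qed

definition cbu_repr :: "nat \<Rightarrow> 'a set \<Rightarrow> 'a set set \<Rightarrow> ('a \<Rightarrow> nat \<Rightarrow> real) \<Rightarrow> ('a \<Rightarrow> nat \<Rightarrow> real) \<Rightarrow> bool"
  where "cbu_repr d V E lo hi \<longleftrightarrow>
     (\<forall>v\<in>V. \<forall>i<d. lo v i < hi v i) \<and>
     (\<forall>u\<in>V. \<forall>v\<in>V. u \<noteq> v \<longrightarrow> obox_d d (lo u) (hi u) \<inter> obox_d d (lo v) (hi v) = {}) \<and>
     (\<forall>u\<in>V. \<forall>v\<in>V. u \<noteq> v \<longrightarrow>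
        ({u, v} \<in> E \<longleftrightarrow> cbox_d d (lo u) (hi u) \<inter> cbox_d d (lo v) (hi v) \<noteq> {})) \<and>
     (\<forall>u\<in>V. \<forall>v\<in>V. u \<noteq> v \<longrightarrow> cbox_d d (lo u) (hi u) \<inter> cbox_d d (lo v) (hi v) \<noteq> {} \<longrightarrow>
        perp_e1_box d (cbox_d d (lo u) (hi u) \<inter> cbox_d d (lo v) (hi v)))"

lemma dCBU_iff_cbu_repr: "dCBU d V E \<longleftrightarrow> 1 \<le> d \<and> (\<exists>lo hi. cbu_repr d V E lo hi)"
  unfolding dCBU_def cbu_repr_def ..

lemma cbu_repr_subset:
  "cbu_repr d V E lo hi \<Longrightarrow> W \<subseteq> V \<Longrightarrow> cbu_repr d W E lo hi"
  unfolding cbu_repr_def by (meson subsetD)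

text \<open>Pairs whose intervals [p v, q v] are disjoint lose their edge; since no two intervals merely
  touch, every remaining contact keeps positive extent in the new coordinate.\<close>

lemma cbu_repr_add_coordinate:
  assumes repr: "cbu_repr d V E lo hi" and "1 \<le> d"
    and pos: "\<forall>v\<in>V. p v < q v"
    and no_touch: "\<forall>u\<in>V. \<forall>v\<in>V. u \<noteq> v \<longrightarrow> q u \<noteq> p v"
  shows "cbu_repr (Suc d) V (E - {{u, v} | u v. q u < p v})
           (\<lambda>v. (lo v)(d := p v)) (\<lambda>v. (hi v)(d := q v))"
proof -
  define C where "C u v = cbox_d d (lo u) (hi u) \<inter> cbox_d d (lo v) (hi v)" for u v
  have edge_iff: "{u, v} \<in> E \<longleftrightarrow> C u v \<noteq> {}"
    and perp: "C u v \<noteq> {} \<Longrightarrow> perp_e1_box d (C u v)"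
    and interiors: "obox_d d (lo u) (hi u) \<inter> obox_d d (lo v) (hi v) = {}"
    if "u \<in> V" "v \<in> V" "u \<noteq> v" for u v
    using repr that unfolding cbu_repr_def C_def by blast+
  have pair_boxes: "cbox_d (Suc d) ((lo u)(d := p u)) ((hi u)(d := q u)) \<inter>
      cbox_d (Suc d) ((lo v)(d := p v)) ((hi v)(d := q v)) =
      prism_d d (C u v) {max (p u) (p v)..min (q u) (q v)}" for u v
    unfolding cbox_d_Suc prism_d_Int C_def by simp
  have C_Rd: "C u v \<subseteq> Rd d" for u v
    unfolding C_def cbox_d_def by auto
  have pair_boxes_empty_iff: "cbox_d (Suc d) ((lo u)(d := p u)) ((hi u)(d := q u)) \<inter>
      cbox_d (Suc d) ((lo v)(d := p v)) ((hi v)(d := q v)) = {} \<longleftrightarrow>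
      C u v = {} \<or> min (q u) (q v) < max (p u) (p v)" for u v
    unfolding pair_boxes prism_d_eq_empty_iff[OF C_Rd] by auto
  have separated_iff: "{u, v} \<in> {{u, v} | u v. q u < p v} \<longleftrightarrow> min (q u) (q v) < max (p u) (p v)"
    if "u \<in> V" "v \<in> V" for u v
  proof -
    have "{u, v} \<in> {{u, v} | u v. q u < p v} \<longleftrightarrow> q u < p v \<or> q v < p u"
      by (auto simp: doubleton_eq_iff)
    moreover have "min (q u) (q v) < max (p u) (p v) \<longleftrightarrow> q u < p v \<or> q v < p u"
      using pos that unfolding min_less_iff_disj less_max_iff_disj by force
    ultimately show ?thesis
      by blast
  qed
  show ?thesis
    unfolding cbu_repr_def
  proof (intro conjI ballI allI impI)
    show "((lo v)(d := p v)) i < ((hi v)(d := q v)) i" if "v \<in> V" "i < Suc d" for v i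
      using that pos repr unfolding cbu_repr_def by (auto simp: less_Suc_eq)
  next
    fix u v assume "u \<in> V" "v \<in> V" "u \<noteq> v"
    then show "obox_d (Suc d) ((lo u)(d := p u)) ((hi u)(d := q u)) \<inter>
        obox_d (Suc d) ((lo v)(d := p v)) ((hi v)(d := q v)) = {}"
      using interiors unfolding obox_d_Suc prism_d_Int by (simp add: prism_d_def)
  next
    fix u v assume uv: "u \<in> V" "v \<in> V" "u \<noteq> v"
    show "{u, v} \<in> E - {{u, v} | u v. q u < p v} \<longleftrightarrow>
        cbox_d (Suc d) ((lo u)(d := p u)) ((hi u)(d := q u)) \<inter>
        cbox_d (Suc d) ((lo v)(d := p v)) ((hi v)(d := q v)) \<noteq> {}"
      unfolding Diff_iff pair_boxes_empty_iff separated_iff[OF uv(1,2)] edge_iff[OF uv] by blast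
  next
    fix u v assume uv: "u \<in> V" "v \<in> V" "u \<noteq> v"
      and "cbox_d (Suc d) ((lo u)(d := p u)) ((hi u)(d := q u)) \<inter>
        cbox_d (Suc d) ((lo v)(d := p v)) ((hi v)(d := q v)) \<noteq> {}"
    then have "C u v \<noteq> {}" and "max (p u) (p v) \<le> min (q u) (q v)"
      unfolding pair_boxes_empty_iff by auto
    moreover have "max (p u) (p v) \<noteq> min (q u) (q v)"
      using no_touch uv pos[rule_format, OF uv(1)] pos[rule_format, OF uv(2)]
      unfolding max_def min_def by (smt (verit, best))
    ultimately have "perp_e1_box d (C u v)" "max (p u) (p v) < min (q u) (q v)"
      using perp[OF uv] by auto
    then show "perp_e1_box (Suc d) (cbox_d (Suc d) ((lo u)(d := p u)) ((hi u)(d := q u)) \<inter>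
        cbox_d (Suc d) ((lo v)(d := p v)) ((hi v)(d := q v)))"
      unfolding pair_boxes by (rule perp_e1_box_prism_d[OF \<open>1 \<le> d\<close>])
  qed
qed

lemma complete_bipartite_edges_eq_separated:
  "complete_bipartite_edges A B =
    {{u, v} | u v. (if u \<in> A then 1 else 3 :: real) < (if v \<in> B then 2 else 0)}"
proof -
  have "(if u \<in> A then 1 else 3 :: real) < (if v \<in> B then 2 else 0) \<longleftrightarrow> u \<in> A \<and> v \<in> B" for u v
    by simp
  then show ?thesis
    unfolding complete_bipartite_edges_def by presburger
qed

lemma dCBU_Diff_complete_bipartite_edges:
  assumes "A \<inter> B = {}" "dCBU d V E"
  shows "dCBU (d + 1) V (E - complete_bipartite_edges A B)"
proof -
  obtain lo hi where "1 \<le> d" and repr: "cbu_repr d V E lo hi"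
    using assms(2) unfolding dCBU_iff_cbu_repr by blast
  have "cbu_repr (Suc d) V (E - complete_bipartite_edges A B)
      (\<lambda>v. (lo v)(d := if v \<in> B then 2 else 0)) (\<lambda>v. (hi v)(d := if v \<in> A then 1 else 3))"
    unfolding complete_bipartite_edges_eq_separated
    by (rule cbu_repr_add_coordinate[OF repr \<open>1 \<le> d\<close>]) (use assms(1) in auto)
  with \<open>1 \<le> d\<close> show ?thesis
    unfolding dCBU_iff_cbu_repr by auto
qed

lemma dCBU_Diff_edges:
  assumes "finite F" "\<forall>e\<in>F. \<exists>u v. u \<noteq> v \<and> e = {u, v}" "dCBU d V E"
  shows "dCBU (d + card F) V (E - F)"
  using assms(1,2)
proof (induction F rule: finite_induct)
  case empty
  then show ?case using assms(3) by simp
next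
  case (insert e F)
  obtain u v where "u \<noteq> v" "e = {u, v}"
    using insert.prems by blast
  then have single: "complete_bipartite_edges {u} {v} = {e}"
    unfolding complete_bipartite_edges_def by auto
  have "dCBU (d + card F) V (E - F)"
    using insert.prems by (intro insert.IH) blast
  then have "dCBU (d + card F + 1) V (E - F - complete_bipartite_edges {u} {v})"
    using \<open>u \<noteq> v\<close> by (intro dCBU_Diff_complete_bipartite_edges) auto
  moreover have "E - insert e F = E - F - {e}"
    by blast
  ultimately show ?case
    using insert.hyps unfolding single by simp
qed

lemma dCBU_subset_vertices: "dCBU d V E \<Longrightarrow> W \<subseteq> V \<Longrightarrow> dCBU d W E"
  unfolding dCBU_iff_cbu_repr using cbu_repr_subset by blast

lemma graph_finite_edges:
  assumes "graph V E"
  shows "finite E"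
proof -
  have "E \<subseteq> Pow V"
  proof
    fix e assume "e \<in> E"
    then obtain u v where "u \<in> V" "v \<in> V" "e = {u, v}"
      using assms unfolding graph_def by blast
    then show "e \<in> Pow V" by simp
  qed
  moreover have "finite V"
    using assms unfolding graph_def by blast
  ultimately show ?thesis
    by (simp add: finite_subset)
qed

lemma CBU_subgraph:
  assumes "graph V E" "subgraph VH EH V E" "CBU V E"
  shows "CBU VH EH"
proof -
  obtain d where "1 \<le> d" and G: "dCBU d V E"
    using assms(3) unfolding CBU_def by blast
  have "finite (E - EH)"
    using graph_finite_edges[OF assms(1)] by simp
  moreover have "\<forall>e\<in>E - EH. \<exists>u v. u \<noteq> v \<and> e = {u, v}"
    using assms(1) unfolding graph_def by blast
  moreover have "E - (E - EH) = EH" and "VH \<subseteq> V"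
    using assms(2) unfolding subgraph_def by auto
  ultimately have "dCBU (d + card (E - EH)) VH EH"
    using dCBU_Diff_edges[OF _ _ G] dCBU_subset_vertices by metis
  moreover have "1 \<le> d + card (E - EH)"
    using \<open>1 \<le> d\<close> by simp
  ultimately show ?thesis
    unfolding CBU_def by blast
qed

theorem mainTheorem9:
  fixes V :: "'a set" and E :: "'a set set"
  assumes "graph V E"
  shows "(\<forall>VH EH. subgraph VH EH V E \<longrightarrow> CBU V E \<longrightarrow> CBU VH EH) \<and>
         (\<forall>A B d. A \<subseteq> V \<and> B \<subseteq> V \<and> A \<inter> B = {} \<longrightarrow> dCBU d V E \<longrightarrow>
             dCBU (d + 1) V (E - complete_bipartite_edges A B))"
  using CBU_subgraph[OF assms] dCBU_Diff_complete_bipartite_edges by blast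

end
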